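(* Let $\mathcal T$ be a theory of $\mathsf{LGI}$ consisting of graded implications and let $\zeta\Rightarrow_e\eta$ be a graded implication. If $\mathcal T\models\zeta\Rightarrow_e\eta$, then $\mathcal T\vdash_{\mathsf{LGI}}\zeta\Rightarrow_t\eta$ for every $t\in[0,1]$ with $t<e$.
   Context: Fix a continuous t-norm $\odot$ on $[0,1]$ and let $c\oplus d = 1-((1-c)\odot(1-d))$. Write $c\odot_{\L} d=\max(c+d-1,0)$, $c\oplus_{\L} d=\min(c+d,1)$. Syntax of $\mathsf{LGI}$: countably many variables $\phi_0,\phi_1,\dots$ and constants $\bot,\top$. Basic expressions are built from variables and constants by binary $\land,\lor,\odot$ and unary $\sim$. A graded implication is written $\alpha\Rightarrow_c\beta$ with $\alpha,\beta$ basic expressions, $c\in[0,1]$. Formulas are built from graded implications by classical $\land,\lor,\lnot$; $\Phi\to\Psi$ abbreviates $\lnot\Phi\lor\Psi$. A theory is a set of formulas. Semantics: an evaluation is a map $v$ from basic expressions to $[0,1]$ with $v(\bot)=0$, $v(\top)=1$, interpreting $\land$ by min, $\lor$ by max, $\odot$ by the t-norm $\odot$, and $\sim$ by $x\mapsto 1-x$. $v$ satisfies $\alpha\Rightarrow_c\beta$ iff $v(\alpha)\le v(\beta)+1-c$; satisfaction extends classically to all formulas. $\mathcal T\models\Phi$ means every evaluation satisfying all elements of $\mathcal T$ satisfies $\Phi$. Calculus $\mathsf{LGI}$: axioms are (i) all substitution instances (by graded implications) of classical propositional tautologies; (ii) for all basic expressions $\alpha,\beta,\gamma$ and $c,d\in[0,1]$: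 ($\land_1$) $(\alpha\Rightarrow_d\beta)\land(\alpha\Rightarrow_d\gamma)\to(\alpha\Rightarrow_d\beta\land\gamma)$; ($\land_2$) $\alpha\land\beta\Rightarrow_1\alpha$; ($\land_3$) $\alpha\land\beta\Rightarrow_1\beta$; ($\lor_1$) $(\alpha\Rightarrow_d\gamma)\land(\beta\Rightarrow_d\gamma)\to(\alpha\lor\beta\Rightarrow_d\gamma)$; ($\lor_2$) $\alpha\Rightarrow_1\alpha\lor\beta$; ($\lor_3$) $\beta\Rightarrow_1\alpha\lor\beta$; ($\odot_1$) $(\top\Rightarrow_c\alpha)\land(\top\Rightarrow_d\beta)\to(\top\Rightarrow_{c\odot d}\alpha\odot\beta)$; ($\odot_2$) $(\alpha\Rightarrow_c\bot)\land(\beta\Rightarrow_d\bot)\to(\alpha\odot\beta\Rightarrow_{c\oplus d}\bot)$; ($\odot_3$) $\top\Rightarrow_1\top\odot\top$; ($\sim_1$) $(\alpha\Rightarrow_d\beta)\to(\sim\beta\Rightarrow_d\sim\alpha)$; ($\sim_2$) $\sim\sim\alpha\Rightarrow_1\alpha$; ($\sim_3$) $\alpha\Rightarrow_1\sim\sim\alpha$; ($\top$) $\alpha\Rightarrow_1\top$; ($\bot$) $\bot\Rightarrow_1\alpha$; (0) $\alpha\Rightarrow_0\beta$; ($c$) $\alpha\Rightarrow_c\alpha$; (inkons) $\lnot(\top\Rightarrow_c\bot)$ for $c>0$; (trans$_1$) $(\alpha\Rightarrow_c\beta)\land(\beta\Rightarrow_d\gamma)\to(\alpha\Rightarrow_{c\odot_{\L}d}\gamma)$;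 (trans$_2$) $(\alpha\Rightarrow_c\bot)\land(\top\Rightarrow_d\beta)\to(\alpha\Rightarrow_{c\oplus_{\L}d}\beta)$; (lin$_1$) $(\alpha\Rightarrow_1\beta)\lor(\beta\Rightarrow_1\alpha)$; (lin$_2$) $(\top\Rightarrow_d\alpha)\lor(\alpha\Rightarrow_{1-d}\bot)$. The only rule is modus ponens. $\mathcal T\vdash_{\mathsf{LGI}}\Phi$ means $\Phi$ has a finite derivation from axioms and elements of $\mathcal T$ by modus ponens. *)

theory Defs
  imports "HOL-Analysis.Analysis"
begin

definition is_tnorm :: "(real \<Rightarrow> real \<Rightarrow> real) \<Rightarrow> bool" where
  "is_tnorm tn \<longleftrightarrow>
     (\<forall>x\<in>{0..1}. \<forall>y\<in>{0..1}. tn x y \<in> {0..1}) \<and>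
     (\<forall>x\<in>{0..1}. \<forall>y\<in>{0..1}. tn x y = tn y x) \<and>
     (\<forall>x\<in>{0..1}. \<forall>y\<in>{0..1}. \<forall>z\<in>{0..1}. tn (tn x y) z = tn x (tn y z)) \<and>
     (\<forall>x\<in>{0..1}. \<forall>y\<in>{0..1}. \<forall>z\<in>{0..1}. x \<le> y \<longrightarrow> tn x z \<le> tn y z) \<and>
     (\<forall>x\<in>{0..1}. tn x 1 = x)"

definition is_cont_tnorm :: "(real \<Rightarrow> real \<Rightarrow> real) \<Rightarrow> bool" where
  "is_cont_tnorm tn \<longleftrightarrow> is_tnorm tn \<and>
     continuous_on ({0..1} \<times> {0..1}) (\<lambda>(x, y). tn x y)"

definition tconorm :: "(real \<Rightarrow> real \<Rightarrow> real) \<Rightarrow> real \<Rightarrow> real \<Rightarrow> real" where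
  "tconorm tn c d = 1 - tn (1 - c) (1 - d)"

definition luk_and :: "real \<Rightarrow> real \<Rightarrow> real" where
  "luk_and c d = max (c + d - 1) 0"

definition luk_or :: "real \<Rightarrow> real \<Rightarrow> real" where
  "luk_or c d = min (c + d) 1"

datatype bexp = Var nat | Bot | Top
  | BAnd bexp bexp | BOr bexp bexp | BTn bexp bexp | BNeg bexp

text \<open>Formulas: graded implications \<open>GI \<alpha> c \<beta>\<close> (meaning \<open>\<alpha> \<Rightarrow>\<^sub>c \<beta>\<close>) combined classically.\<close>
datatype fml = GI bexp real bexp | FAnd fml fml | FOr fml fml | FNot fml

definition FImp :: "fml \<Rightarrow> fml \<Rightarrow> fml" where
  "FImp \<Phi> \<Psi> = FOr (FNot \<Phi>) \<Psi>"

fun wf :: "fml \<Rightarrow> bool" where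
  "wf (GI \<alpha> c \<beta>) \<longleftrightarrow> c \<in> {0..1}"
| "wf (FAnd \<Phi> \<Psi>) \<longleftrightarrow> wf \<Phi> \<and> wf \<Psi>"
| "wf (FOr \<Phi> \<Psi>) \<longleftrightarrow> wf \<Phi> \<and> wf \<Psi>"
| "wf (FNot \<Phi>) \<longleftrightarrow> wf \<Phi>"

fun eval :: "(real \<Rightarrow> real \<Rightarrow> real) \<Rightarrow> (nat \<Rightarrow> real) \<Rightarrow> bexp \<Rightarrow> real" where
  "eval tn a (Var n) = a n"
| "eval tn a Bot = 0"
| "eval tn a Top = 1"
| "eval tn a (BAnd x y) = min (eval tn a x) (eval tn a y)"
| "eval tn a (BOr x y) = max (eval tn a x) (eval tn a y)"
| "eval tn a (BTn x y) = tn (eval tn a x) (eval tn a y)"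
| "eval tn a (BNeg x) = 1 - eval tn a x"

fun sat :: "(real \<Rightarrow> real \<Rightarrow> real) \<Rightarrow> (nat \<Rightarrow> real) \<Rightarrow> fml \<Rightarrow> bool" where
  "sat tn a (GI \<alpha> c \<beta>) \<longleftrightarrow> eval tn a \<alpha> \<le> eval tn a \<beta> + 1 - c"
| "sat tn a (FAnd \<Phi> \<Psi>) \<longleftrightarrow> sat tn a \<Phi> \<and> sat tn a \<Psi>"
| "sat tn a (FOr \<Phi> \<Psi>) \<longleftrightarrow> sat tn a \<Phi> \<or> sat tn a \<Psi>"
| "sat tn a (FNot \<Phi>) \<longleftrightarrow> \<not> sat tn a \<Phi>"

definition entails :: "(real \<Rightarrow> real \<Rightarrow> real) \<Rightarrow> fml set \<Rightarrow> fml \<Rightarrow> bool" where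
  "entails tn T \<Phi> \<longleftrightarrow>
     (\<forall>a. (\<forall>n. a n \<in> {0..1}) \<longrightarrow> (\<forall>\<Psi>\<in>T. sat tn a \<Psi>) \<longrightarrow> sat tn a \<Phi>)"

fun bval :: "(bexp \<Rightarrow> real \<Rightarrow> bexp \<Rightarrow> bool) \<Rightarrow> fml \<Rightarrow> bool" where
  "bval V (GI \<alpha> c \<beta>) = V \<alpha> c \<beta>"
| "bval V (FAnd \<Phi> \<Psi>) \<longleftrightarrow> bval V \<Phi> \<and> bval V \<Psi>"
| "bval V (FOr \<Phi> \<Psi>) \<longleftrightarrow> bval V \<Phi> \<or> bval V \<Psi>"
| "bval V (FNot \<Phi>) \<longleftrightarrow> \<not> bval V \<Phi>"

text \<open>Substitution instances (by graded implications) of classical tautologies are exactly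
  the well-formed formulas that are true under every valuation of their graded-implication atoms.\<close>
definition taut_inst :: "fml \<Rightarrow> bool" where
  "taut_inst \<Phi> \<longleftrightarrow> wf \<Phi> \<and> (\<forall>V. bval V \<Phi>)"

inductive lgi_axiom :: "(real \<Rightarrow> real \<Rightarrow> real) \<Rightarrow> fml \<Rightarrow> bool" for tn where
  taut: "taut_inst \<Phi> \<Longrightarrow> lgi_axiom tn \<Phi>"
| and1: "d \<in> {0..1} \<Longrightarrow> lgi_axiom tn
    (FImp (FAnd (GI \<alpha> d \<beta>) (GI \<alpha> d \<gamma>)) (GI \<alpha> d (BAnd \<beta> \<gamma>)))"
| and2: "lgi_axiom tn (GI (BAnd \<alpha> \<beta>) 1 \<alpha>)"
| and3: "lgi_axiom tn (GI (BAnd \<alpha> \<beta>) 1 \<beta>)"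
| or1: "d \<in> {0..1} \<Longrightarrow> lgi_axiom tn
    (FImp (FAnd (GI \<alpha> d \<gamma>) (GI \<beta> d \<gamma>)) (GI (BOr \<alpha> \<beta>) d \<gamma>))"
| or2: "lgi_axiom tn (GI \<alpha> 1 (BOr \<alpha> \<beta>))"
| or3: "lgi_axiom tn (GI \<beta> 1 (BOr \<alpha> \<beta>))"
| tn1: "c \<in> {0..1} \<Longrightarrow> d \<in> {0..1} \<Longrightarrow> lgi_axiom tn
    (FImp (FAnd (GI Top c \<alpha>) (GI Top d \<beta>)) (GI Top (tn c d) (BTn \<alpha> \<beta>)))"
| tn2: "c \<in> {0..1} \<Longrightarrow> d \<in> {0..1} \<Longrightarrow> lgi_axiom tn
    (FImp (FAnd (GI \<alpha> c Bot) (GI \<beta> d Bot)) (GI (BTn \<alpha> \<beta>) (tconorm tn c d) Bot))"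
| tn3: "lgi_axiom tn (GI Top 1 (BTn Top Top))"
| neg1: "d \<in> {0..1} \<Longrightarrow> lgi_axiom tn (FImp (GI \<alpha> d \<beta>) (GI (BNeg \<beta>) d (BNeg \<alpha>)))"
| neg2: "lgi_axiom tn (GI (BNeg (BNeg \<alpha>)) 1 \<alpha>)"
| neg3: "lgi_axiom tn (GI \<alpha> 1 (BNeg (BNeg \<alpha>)))"
| top: "lgi_axiom tn (GI \<alpha> 1 Top)"
| bot: "lgi_axiom tn (GI Bot 1 \<alpha>)"
| zero: "lgi_axiom tn (GI \<alpha> 0 \<beta>)"
| refl: "c \<in> {0..1} \<Longrightarrow> lgi_axiom tn (GI \<alpha> c \<alpha>)"
| inkons: "c \<in> {0..1} \<Longrightarrow> c > 0 \<Longrightarrow> lgi_axiom tn (FNot (GI Top c Bot))"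
| trans1: "c \<in> {0..1} \<Longrightarrow> d \<in> {0..1} \<Longrightarrow> lgi_axiom tn
    (FImp (FAnd (GI \<alpha> c \<beta>) (GI \<beta> d \<gamma>)) (GI \<alpha> (luk_and c d) \<gamma>))"
| trans2: "c \<in> {0..1} \<Longrightarrow> d \<in> {0..1} \<Longrightarrow> lgi_axiom tn
    (FImp (FAnd (GI \<alpha> c Bot) (GI Top d \<beta>)) (GI \<alpha> (luk_or c d) \<beta>))"
| lin1: "lgi_axiom tn (FOr (GI \<alpha> 1 \<beta>) (GI \<beta> 1 \<alpha>))"
| lin2: "d \<in> {0..1} \<Longrightarrow> lgi_axiom tn (FOr (GI Top d \<alpha>) (GI \<alpha> (1 - d) Bot))"

inductive lgi_deriv :: "(real \<Rightarrow> real \<Rightarrow> real) \<Rightarrow> fml set \<Rightarrow> fml \<Rightarrow> bool" for tn T where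
  ax: "lgi_axiom tn \<Phi> \<Longrightarrow> lgi_deriv tn T \<Phi>"
| hyp: "\<Phi> \<in> T \<Longrightarrow> lgi_deriv tn T \<Phi>"
| mp: "lgi_deriv tn T \<Phi> \<Longrightarrow> lgi_deriv tn T (FImp \<Phi> \<Psi>) \<Longrightarrow> lgi_deriv tn T \<Psi>"

end

theory Submission
  imports Defs
begin

text \<open>
  Completeness is proved with a canonical model. If \<open>\<zeta> \<Rightarrow>\<^sub>t \<eta>\<close> is not derivable from \<open>T\<close>,
  Lindenbaum's lemma extends \<open>T\<close> to a deductively closed, consistent and prime theory \<open>M\<close> that
  does not contain it. The grades \<open>c\<close> with \<open>\<top> \<Rightarrow>\<^sub>c \<alpha> \<in> M\<close> form an initial segment of \<open>[0,1]\<close>,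
  and its supremum \<open>v(\<alpha>)\<close> is an evaluation: the axioms for \<open>\<and>, \<or>, \<sim>, \<odot>\<close> determine the
  segments of compound expressions from those of their parts (for \<open>\<odot>\<close> only up to a limit, which is
  where continuity of the t-norm enters). The transitivity and linearity axioms give
  \<open>\<alpha> \<Rightarrow>\<^sub>c \<beta> \<in> M \<Longrightarrow> v(\<alpha>) \<le> v(\<beta>) + 1 - c\<close> and \<open>v(\<alpha>) < v(\<beta>) + 1 - c \<Longrightarrow> \<alpha> \<Rightarrow>\<^sub>c \<beta> \<in> M\<close>.
  So \<open>v\<close> satisfies \<open>T\<close>, hence \<open>\<zeta> \<Rightarrow>\<^sub>e \<eta>\<close>, and then \<open>v(\<zeta>) < v(\<eta>) + 1 - t\<close> puts \<open>\<zeta> \<Rightarrow>\<^sub>t \<eta>\<close>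
  into \<open>M\<close>. The gap between the two conditions is why only the grades \<open>t < e\<close> are reached.
\<close>

lemma is_tnorm_range: "is_tnorm tn \<Longrightarrow> x \<in> {0..1} \<Longrightarrow> y \<in> {0..1} \<Longrightarrow> tn x y \<in> {0..1}"
  unfolding is_tnorm_def by blast

lemma lgi_axiom_wf: "lgi_axiom tn \<Phi> \<Longrightarrow> is_tnorm tn \<Longrightarrow> wf \<Phi>"
proof (induction rule: lgi_axiom.induct)
  case (tn1 c d \<alpha> \<beta>)
  then show ?case using is_tnorm_range[of tn c d] by (simp add: FImp_def)
next
  case (tn2 c d \<alpha> \<beta>)
  then show ?case using is_tnorm_range[of tn "1 - c" "1 - d"] by (simp add: FImp_def tconorm_def)
qed (auto simp: taut_inst_def FImp_def luk_and_def luk_or_def)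

lemma lgi_deriv_wf: "lgi_deriv tn S \<Phi> \<Longrightarrow> is_tnorm tn \<Longrightarrow> \<forall>\<Psi>\<in>S. wf \<Psi> \<Longrightarrow> wf \<Phi>"
  by (induction rule: lgi_deriv.induct) (auto simp: lgi_axiom_wf FImp_def)

lemma lgi_deriv_mono: "lgi_deriv tn S \<Phi> \<Longrightarrow> S \<subseteq> S' \<Longrightarrow> lgi_deriv tn S' \<Phi>"
  by (induction rule: lgi_deriv.induct) (auto intro: lgi_deriv.intros)

lemma lgi_deriv_finite: "lgi_deriv tn S \<Phi> \<Longrightarrow> \<exists>F\<subseteq>S. finite F \<and> lgi_deriv tn F \<Phi>"
proof (induction rule: lgi_deriv.induct)
  case (ax \<Phi>)
  then show ?case by (auto intro: lgi_deriv.ax)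
next
  case (hyp \<Phi>)
  then show ?case by (intro exI[of _ "{\<Phi>}"]) (auto intro: lgi_deriv.hyp)
next
  case (mp \<Phi> \<Psi>)
  then obtain F1 F2 where "F1 \<subseteq> S" "finite F1" "lgi_deriv tn F1 \<Phi>"
    and "F2 \<subseteq> S" "finite F2" "lgi_deriv tn F2 (FImp \<Phi> \<Psi>)" by blast
  then show ?case
    by (intro exI[of _ "F1 \<union> F2"]) (auto intro: lgi_deriv.mp lgi_deriv_mono)
qed

lemma lgi_deriv_tautological_consequence:
  assumes "\<forall>X\<in>set Xs. lgi_deriv tn S X \<and> wf X" and "wf Z"
    and "\<forall>V. (\<forall>X\<in>set Xs. bval V X) \<longrightarrow> bval V Z"
  shows "lgi_deriv tn S Z"
  using assms
proof (induction Xs arbitrary: Z)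
  case Nil
  then show ?case by (intro lgi_deriv.ax lgi_axiom.taut) (simp add: taut_inst_def)
next
  case (Cons X Xs)
  have "lgi_deriv tn S (FImp X Z)"
    using Cons.prems by (intro Cons.IH) (auto simp: FImp_def)
  then show ?case
    using Cons.prems(1) by (auto intro: lgi_deriv.mp)
qed

lemma lgi_deduction:
  assumes "lgi_deriv tn (insert A S) B" and "is_tnorm tn" "\<forall>\<Phi>\<in>S. wf \<Phi>" "wf A"
  shows "lgi_deriv tn S (FImp A B)"
  using assms(1)
proof (induction rule: lgi_deriv.induct)
  case (ax \<Phi>)
  then show ?case
    using lgi_axiom_wf[OF ax assms(2)] assms(4)
    by (intro lgi_deriv_tautological_consequence[of "[\<Phi>]"]) (auto intro: lgi_deriv.ax simp: FImp_def)
next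
  case (hyp \<Phi>)
  show ?case
  proof (cases "\<Phi> = A")
    case True
    then show ?thesis
      using assms(4) by (intro lgi_deriv_tautological_consequence[of "[]"]) (auto simp: FImp_def)
  next
    case False
    then show ?thesis
      using hyp assms(3,4)
      by (intro lgi_deriv_tautological_consequence[of "[\<Phi>]"]) (auto intro: lgi_deriv.hyp simp: FImp_def)
  qed
next
  case (mp \<Phi> \<Psi>)
  have "wf (FImp \<Phi> \<Psi>)"
    using lgi_deriv_wf[OF mp.hyps(2) assms(2)] assms(3,4) by auto
  then show ?case
    using mp.IH assms(4)
    by (intro lgi_deriv_tautological_consequence[of "[FImp A \<Phi>, FImp A (FImp \<Phi> \<Psi>)]"])
      (auto simp: FImp_def)
qed

section \<open>Prime theories\<close>

lemma lgi_lindenbaum: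
  assumes "\<forall>\<Phi>\<in>T. wf \<Phi>" and "\<not> lgi_deriv tn T \<Phi>0"
  obtains M where "T \<subseteq> M" "\<forall>\<Phi>\<in>M. wf \<Phi>" "\<not> lgi_deriv tn M \<Phi>0"
    and "\<And>\<Psi>. wf \<Psi> \<Longrightarrow> \<Psi> \<notin> M \<Longrightarrow> lgi_deriv tn (insert \<Psi> M) \<Phi>0"
proof -
  define \<A> where "\<A> = {S. T \<subseteq> S \<and> (\<forall>\<Phi>\<in>S. wf \<Phi>) \<and> \<not> lgi_deriv tn S \<Phi>0}"
  have "\<Union>\<C> \<in> \<A>" if "\<C> \<noteq> {}" and chain: "subset.chain \<A> \<C>" for \<C>
  proof -
    have "\<not> lgi_deriv tn (\<Union>\<C>) \<Phi>0"
    proof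
      assume "lgi_deriv tn (\<Union>\<C>) \<Phi>0"
      then obtain F where F: "F \<subseteq> \<Union>\<C>" "finite F" "lgi_deriv tn F \<Phi>0"
        using lgi_deriv_finite by blast
      then obtain S where "S \<in> \<C>" "F \<subseteq> S"
        using finite_subset_Union_chain[OF F(2,1) \<open>\<C> \<noteq> {}\<close> chain] by blast
      then show False
        using F(3) chain lgi_deriv_mono by (force simp: \<A>_def subset.chain_def)
    qed
    then show ?thesis
      using that by (fastforce simp: \<A>_def subset.chain_def)
  qed
  moreover have "T \<in> \<A>"
    using assms by (simp add: \<A>_def)
  ultimately obtain M where "M \<in> \<A>" and maximal: "\<forall>X\<in>\<A>. M \<subseteq> X \<longrightarrow> X = M"
    using subset_Zorn_nonempty[of \<A>] by blast
  show thesis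
  proof (rule that)
    show "T \<subseteq> M" "\<forall>\<Phi>\<in>M. wf \<Phi>" "\<not> lgi_deriv tn M \<Phi>0"
      using \<open>M \<in> \<A>\<close> by (auto simp: \<A>_def)
    show "lgi_deriv tn (insert \<Psi> M) \<Phi>0" if "wf \<Psi>" "\<Psi> \<notin> M" for \<Psi>
      using that \<open>M \<in> \<A>\<close> maximal[rule_format, of "insert \<Psi> M"] by (auto simp: \<A>_def)
  qed
qed

locale lgi_prime_theory =
  fixes tn :: "real \<Rightarrow> real \<Rightarrow> real" and M :: "fml set"
  assumes cont_tnorm: "is_cont_tnorm tn"
    and wf_mem: "\<Phi> \<in> M \<Longrightarrow> wf \<Phi>"
    and deriv_closed: "lgi_deriv tn M \<Phi> \<Longrightarrow> \<Phi> \<in> M"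
    and consistent: "FNot \<Phi> \<in> M \<Longrightarrow> \<Phi> \<notin> M"
    and prime: "FOr \<Phi> \<Psi> \<in> M \<Longrightarrow> \<Phi> \<in> M \<or> \<Psi> \<in> M"

lemma lgi_prime_extension:
  assumes "is_cont_tnorm tn" and "\<forall>\<Phi>\<in>T. wf \<Phi>" "wf \<Phi>0" and "\<not> lgi_deriv tn T \<Phi>0"
  obtains M where "T \<subseteq> M" "\<Phi>0 \<notin> M" "lgi_prime_theory tn M"
proof -
  have tnorm: "is_tnorm tn"
    using assms(1) by (simp add: is_cont_tnorm_def)
  obtain M where "T \<subseteq> M" and wf_M: "\<forall>\<Phi>\<in>M. wf \<Phi>" and not_deriv: "\<not> lgi_deriv tn M \<Phi>0"
    and maximal: "\<And>\<Psi>. wf \<Psi> \<Longrightarrow> \<Psi> \<notin> M \<Longrightarrow> lgi_deriv tn (insert \<Psi> M) \<Phi>0"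
    using lgi_lindenbaum[OF assms(2,4)] by blast
  have refuted: "lgi_deriv tn M (FImp \<Psi> \<Phi>0)" if "wf \<Psi>" "\<Psi> \<notin> M" for \<Psi>
    using lgi_deduction[OF maximal[OF that] tnorm wf_M that(1)] .
  have "lgi_prime_theory tn M"
  proof
    show "\<Phi> \<in> M" if "lgi_deriv tn M \<Phi>" for \<Phi>
      using that refuted[of \<Phi>] lgi_deriv_wf[OF that tnorm wf_M] not_deriv lgi_deriv.mp by blast
    show "\<Phi> \<notin> M" if "FNot \<Phi> \<in> M" for \<Phi>
    proof
      assume "\<Phi> \<in> M"
      then have "lgi_deriv tn M \<Phi>0"
        using that wf_M assms(3)
        by (intro lgi_deriv_tautological_consequence[of "[\<Phi>, FNot \<Phi>]"]) (auto intro: lgi_deriv.hyp)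
      with not_deriv show False ..
    qed
    show "\<Phi> \<in> M \<or> \<Psi> \<in> M" if "FOr \<Phi> \<Psi> \<in> M" for \<Phi> \<Psi>
    proof (rule ccontr)
      assume "\<not> (\<Phi> \<in> M \<or> \<Psi> \<in> M)"
      then have "lgi_deriv tn M (FImp \<Phi> \<Phi>0)" "lgi_deriv tn M (FImp \<Psi> \<Phi>0)"
        using that wf_M refuted by auto
      then have "lgi_deriv tn M \<Phi>0"
        using that wf_M assms(3)
        by (intro lgi_deriv_tautological_consequence[of "[FOr \<Phi> \<Psi>, FImp \<Phi> \<Phi>0, FImp \<Psi> \<Phi>0]"])
          (auto intro: lgi_deriv.hyp simp: FImp_def)
      with not_deriv show False ..
    qed
  qed (use assms(1) wf_M in auto)
  moreover have "\<Phi>0 \<notin> M"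
    using not_deriv lgi_deriv.hyp by blast
  ultimately show thesis
    using \<open>T \<subseteq> M\<close> that by blast
qed

context lgi_prime_theory
begin

lemma tnorm: "is_tnorm tn"
  using cont_tnorm by (simp add: is_cont_tnorm_def)

lemma axiom_mem: "lgi_axiom tn \<Phi> \<Longrightarrow> \<Phi> \<in> M"
  by (intro deriv_closed lgi_deriv.ax)

lemma imp_mem: "FImp \<Phi> \<Psi> \<in> M \<Longrightarrow> \<Phi> \<in> M \<Longrightarrow> \<Psi> \<in> M"
  by (meson deriv_closed lgi_deriv.hyp lgi_deriv.mp)

lemma imp_and_mem:
  assumes "FImp (FAnd \<Phi> \<Psi>) X \<in> M" and "\<Phi> \<in> M" "\<Psi> \<in> M"
  shows "X \<in> M"
proof -
  have "FAnd \<Phi> \<Psi> \<in> M"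
    using assms(2,3)
    by (intro deriv_closed lgi_deriv_tautological_consequence[of "[\<Phi>, \<Psi>]"]) (auto intro: lgi_deriv.hyp wf_mem)
  then show ?thesis
    by (rule imp_mem[OF assms(1)])
qed

lemma GI_and1: "d \<in> {0..1} \<Longrightarrow> GI \<alpha> d \<beta> \<in> M \<Longrightarrow> GI \<alpha> d \<gamma> \<in> M \<Longrightarrow> GI \<alpha> d (BAnd \<beta> \<gamma>) \<in> M"
  by (rule imp_and_mem[OF axiom_mem[OF lgi_axiom.and1]])

lemma GI_or1: "d \<in> {0..1} \<Longrightarrow> GI \<alpha> d \<gamma> \<in> M \<Longrightarrow> GI \<beta> d \<gamma> \<in> M \<Longrightarrow> GI (BOr \<alpha> \<beta>) d \<gamma> \<in> M"
  by (rule imp_and_mem[OF axiom_mem[OF lgi_axiom.or1]])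

lemma GI_tn1:
  "c \<in> {0..1} \<Longrightarrow> d \<in> {0..1} \<Longrightarrow> GI Top c \<alpha> \<in> M \<Longrightarrow> GI Top d \<beta> \<in> M
    \<Longrightarrow> GI Top (tn c d) (BTn \<alpha> \<beta>) \<in> M"
  by (rule imp_and_mem[OF axiom_mem[OF lgi_axiom.tn1]])

lemma GI_tn2:
  "c \<in> {0..1} \<Longrightarrow> d \<in> {0..1} \<Longrightarrow> GI \<alpha> c Bot \<in> M \<Longrightarrow> GI \<beta> d Bot \<in> M
    \<Longrightarrow> GI (BTn \<alpha> \<beta>) (tconorm tn c d) Bot \<in> M"
  by (rule imp_and_mem[OF axiom_mem[OF lgi_axiom.tn2]])

lemma GI_neg1: "d \<in> {0..1} \<Longrightarrow> GI \<alpha> d \<beta> \<in> M \<Longrightarrow> GI (BNeg \<beta>) d (BNeg \<alpha>) \<in> M"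
  by (rule imp_mem[OF axiom_mem[OF lgi_axiom.neg1]])

lemma GI_trans1:
  "c \<in> {0..1} \<Longrightarrow> d \<in> {0..1} \<Longrightarrow> GI \<alpha> c \<beta> \<in> M \<Longrightarrow> GI \<beta> d \<gamma> \<in> M
    \<Longrightarrow> GI \<alpha> (luk_and c d) \<gamma> \<in> M"
  by (rule imp_and_mem[OF axiom_mem[OF lgi_axiom.trans1]])

lemma GI_trans2:
  "c \<in> {0..1} \<Longrightarrow> d \<in> {0..1} \<Longrightarrow> GI \<alpha> c Bot \<in> M \<Longrightarrow> GI Top d \<beta> \<in> M
    \<Longrightarrow> GI \<alpha> (luk_or c d) \<beta> \<in> M"
  by (rule imp_and_mem[OF axiom_mem[OF lgi_axiom.trans2]])

lemma GI_lin2: "d \<in> {0..1} \<Longrightarrow> GI Top d \<alpha> \<in> M \<or> GI \<alpha> (1 - d) Bot \<in> M"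
  by (rule prime[OF axiom_mem[OF lgi_axiom.lin2]])

lemma GI_Top_Bot_not_mem: "c \<in> {0..1} \<Longrightarrow> 0 < c \<Longrightarrow> GI Top c Bot \<notin> M"
  by (rule consistent[OF axiom_mem[OF lgi_axiom.inkons]])

lemma GI_lower_grade:
  assumes "GI \<alpha> c' \<beta> \<in> M" "c' \<in> {0..1}" "0 \<le> c" "c \<le> c'"
  shows "GI \<alpha> c \<beta> \<in> M"
proof -
  have "GI \<alpha> (luk_and c' (1 - (c' - c))) \<beta> \<in> M"
    using assms by (intro GI_trans1[OF _ _ _ axiom_mem[OF lgi_axiom.refl]]) auto
  moreover have "luk_and c' (1 - (c' - c)) = c"
    using assms by (simp add: luk_and_def)
  ultimately show ?thesis by simp
qed

lemma GI_Top_BNeg_Bot: "GI Top 1 (BNeg Bot) \<in> M"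
proof -
  have "GI (BNeg (BNeg Top)) 1 (BNeg Bot) \<in> M"
    by (intro GI_neg1 axiom_mem[OF lgi_axiom.bot]) simp
  from GI_trans1[OF _ _ axiom_mem[OF lgi_axiom.neg3] this] show ?thesis
    by (simp add: luk_and_def)
qed

lemma GI_BNeg_Top_Bot: "GI (BNeg Top) 1 Bot \<in> M"
proof -
  have "GI (BNeg Top) 1 (BNeg (BNeg Bot)) \<in> M"
    by (intro GI_neg1 axiom_mem[OF lgi_axiom.top]) simp
  from GI_trans1[OF _ _ this axiom_mem[OF lgi_axiom.neg2]] show ?thesis
    by (simp add: luk_and_def)
qed

end

section \<open>The canonical evaluation\<close>

lemma unit_interval_approx_below:
  fixes u :: real
  assumes "u \<in> {0..1}"
  obtains X where "X \<longlonglongrightarrow> u" "\<And>n. X n \<in> {0..1}" "\<And>n. X n < u \<or> X n = 0"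
proof
  show "(\<lambda>n. u * (real n / real (Suc n))) \<longlonglongrightarrow> u"
    using tendsto_mult[OF tendsto_const LIMSEQ_n_over_Suc_n, of u] by simp
  fix n
  have q: "0 \<le> real n / real (Suc n)" "real n / real (Suc n) < 1"
    by (auto simp: field_simps)
  show "u * (real n / real (Suc n)) \<in> {0..1}"
    using assms q mult_le_one[of u "real n / real (Suc n)"] by auto
  show "u * (real n / real (Suc n)) < u \<or> u * (real n / real (Suc n)) = 0"
    using assms q mult_strict_left_mono[of "real n / real (Suc n)" 1 u] by (cases "u = 0") auto
qed

lemma unit_interval_approx_above:
  fixes u :: real
  assumes "u \<in> {0..1}"
  obtains X where "X \<longlonglongrightarrow> u" "\<And>n. X n \<in> {0..1}" "\<And>n. u < X n \<or> X n = 1"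
proof -
  obtain Y where "Y \<longlonglongrightarrow> 1 - u" "\<And>n. Y n \<in> {0..1}" "\<And>n. Y n < 1 - u \<or> Y n = 0"
    using unit_interval_approx_below[of "1 - u"] assms by auto
  moreover have "(\<lambda>n. 1 - Y n) \<longlonglongrightarrow> 1 - (1 - u)"
    by (intro tendsto_diff tendsto_const) fact
  ultimately show thesis
    by (intro that[of "\<lambda>n. 1 - Y n"]) force+
qed

lemma cont_tnorm_tendsto:
  assumes "is_cont_tnorm tn" and "X \<longlonglongrightarrow> u" "Y \<longlonglongrightarrow> w" and "u \<in> {0..1}" "w \<in> {0..1}"
    and "\<And>n. X n \<in> {0..1}" "\<And>n. Y n \<in> {0..1}"
  shows "(\<lambda>n. tn (X n) (Y n)) \<longlonglongrightarrow> tn u w"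
proof -
  have "continuous_on ({0..1} \<times> {0..1}) (\<lambda>(x, y). tn x y)"
    using assms(1) by (simp add: is_cont_tnorm_def)
  from continuous_on_tendsto_compose[OF this tendsto_Pair[OF assms(2,3)]] show ?thesis
    using assms(4-) by simp
qed

context lgi_prime_theory
begin

definition val :: "bexp \<Rightarrow> real" where
  "val \<alpha> = Sup {c \<in> {0..1}. GI Top c \<alpha> \<in> M}"

lemma bdd_above_grades: "bdd_above {c \<in> {0..1}. GI Top c \<alpha> \<in> M}"
  by (rule bdd_aboveI[of _ 1]) auto

lemma zero_in_grades: "0 \<in> {c \<in> {0..1}. GI Top c \<alpha> \<in> M}"
  by (simp add: axiom_mem lgi_axiom.zero)

lemma le_val: "c \<in> {0..1} \<Longrightarrow> GI Top c \<alpha> \<in> M \<Longrightarrow> c \<le> val \<alpha>"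
  unfolding val_def by (rule cSup_upper[OF _ bdd_above_grades]) simp

lemma val_nonneg: "0 \<le> val \<alpha>"
  using le_val zero_in_grades by blast

lemma val_le_one: "val \<alpha> \<le> 1"
  unfolding val_def using zero_in_grades by (intro cSup_least) (blast, simp)

lemma val_Top: "val Top = 1"
  using le_val[OF _ axiom_mem[OF lgi_axiom.refl[of 1]]] val_le_one[of Top] by simp

lemma val_Bot: "val Bot = 0"
proof -
  have "val Bot \<le> 0"
    unfolding val_def using zero_in_grades GI_Top_Bot_not_mem
    by (intro cSup_least) (blast, force)
  then show ?thesis
    using val_nonneg[of Bot] by simp
qed

lemma GI_Top_below_val: "0 \<le> c \<Longrightarrow> c < val \<alpha> \<or> c = 0 \<Longrightarrow> GI Top c \<alpha> \<in> M"
proof (elim disjE)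
  assume "0 \<le> c" "c < val \<alpha>"
  then obtain c' where "c' \<in> {0..1}" "GI Top c' \<alpha> \<in> M" "c < c'"
    using less_cSup_iff[OF _ bdd_above_grades] zero_in_grades unfolding val_def by blast
  then show ?thesis
    using GI_lower_grade \<open>0 \<le> c\<close> by (meson less_imp_le)
qed (simp add: axiom_mem lgi_axiom.zero)

lemma GI_Bot_above_val: "x \<le> 1 \<Longrightarrow> val \<alpha> < x \<or> x = 1 \<Longrightarrow> GI \<alpha> (1 - x) Bot \<in> M"
proof (elim disjE)
  assume "x \<le> 1" "val \<alpha> < x"
  then have "x \<in> {0..1}" "GI Top x \<alpha> \<notin> M"
    using val_nonneg[of \<alpha>] le_val[of x \<alpha>] by auto
  then show ?thesis
    using GI_lin2 by blast
qed (simp add: axiom_mem lgi_axiom.zero)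

lemma val_le_of_GI: "c \<in> {0..1} \<Longrightarrow> GI \<alpha> c \<beta> \<in> M \<Longrightarrow> val \<alpha> \<le> val \<beta> + 1 - c"
  unfolding val_def[of \<alpha>]
proof (intro cSup_least)
  fix d assume "c \<in> {0..1}" "GI \<alpha> c \<beta> \<in> M" "d \<in> {d \<in> {0..1}. GI Top d \<alpha> \<in> M}"
  then have "luk_and d c \<le> val \<beta>"
    by (intro le_val GI_trans1) (auto simp: luk_and_def)
  then show "d \<le> val \<beta> + 1 - c"
    by (simp add: luk_and_def)
qed (use zero_in_grades in blast)

text \<open>Prove \<open>\<beta>\<close> to a grade just below \<open>val \<beta>\<close>, refute \<open>\<alpha>\<close> to a grade just below \<open>1 - val \<alpha>\<close>,
  and chain the two with (trans\<open>\<^sub>2\<close>).\<close>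
lemma GI_of_val_less:
  assumes c: "c \<in> {0..1}" and less: "val \<alpha> < val \<beta> + 1 - c"
  shows "GI \<alpha> c \<beta> \<in> M"
proof -
  define g where "g = val \<beta> + 1 - c - val \<alpha>"
  define r where "r = min 1 (val \<alpha> + g / 2)"
  define s where "s = max 0 (val \<beta> - g / 2)"
  have "g > 0"
    using less by (simp add: g_def)
  then have r: "r \<in> {0..1}" "val \<alpha> < r \<or> r = 1" and s: "s \<in> {0..1}" "s < val \<beta> \<or> s = 0"
    using val_nonneg[of \<alpha>] val_le_one[of \<beta>] unfolding r_def s_def by (auto simp: min_def max_def)
  have "GI \<alpha> (luk_or (1 - r) s) \<beta> \<in> M"
    using r s by (intro GI_trans2[OF _ _ GI_Bot_above_val GI_Top_below_val]) auto
  moreover have "r \<le> val \<alpha> + g / 2" "val \<beta> - g / 2 \<le> s"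
    by (simp_all add: r_def s_def)
  then have "c \<le> 1 - r + s"
    using g_def by linarith
  then have "c \<le> luk_or (1 - r) s" "luk_or (1 - r) s \<in> {0..1}"
    using r s c by (auto simp: luk_or_def)
  ultimately show ?thesis
    using c by (auto intro: GI_lower_grade[of \<alpha> "luk_or (1 - r) s"])
qed

lemma val_le_of_GI_Bot: "x \<in> {0..1} \<Longrightarrow> GI \<alpha> (1 - x) Bot \<in> M \<Longrightarrow> val \<alpha> \<le> x"
  using val_le_of_GI[of "1 - x" \<alpha> Bot] by (simp add: val_Bot)

lemma le_val_if_below:
  assumes "x \<le> 1" and "\<And>c. c \<in> {0..1} \<Longrightarrow> c < x \<Longrightarrow> GI Top c \<alpha> \<in> M"
  shows "x \<le> val \<alpha>"
proof (rule dense_le)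
  fix c assume "c < x"
  then show "c \<le> val \<alpha>"
    using assms le_val[of c \<alpha>] val_nonneg[of \<alpha>] by (cases "0 \<le> c") auto
qed

lemma val_le_if_above:
  assumes "0 \<le> x" and "\<And>r. r \<in> {0..1} \<Longrightarrow> x < r \<Longrightarrow> GI \<alpha> (1 - r) Bot \<in> M"
  shows "val \<alpha> \<le> x"
proof (rule dense_ge)
  fix r assume "x < r"
  then show "val \<alpha> \<le> r"
    using assms val_le_of_GI_Bot[of r \<alpha>] val_le_one[of \<alpha>] by (cases "r \<le> 1") auto
qed

lemma val_BAnd: "val (BAnd \<alpha> \<beta>) = min (val \<alpha>) (val \<beta>)"
proof (rule antisym)
  show "val (BAnd \<alpha> \<beta>) \<le> min (val \<alpha>) (val \<beta>)"
    using val_le_of_GI[OF _ axiom_mem[OF lgi_axiom.and2]] val_le_of_GI[OF _ axiom_mem[OF lgi_axiom.and3]]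
    by simp
  show "min (val \<alpha>) (val \<beta>) \<le> val (BAnd \<alpha> \<beta>)"
    using val_le_one[of \<alpha>] by (intro le_val_if_below GI_and1 GI_Top_below_val) auto
qed

lemma val_BOr: "val (BOr \<alpha> \<beta>) = max (val \<alpha>) (val \<beta>)"
proof (rule antisym)
  show "max (val \<alpha>) (val \<beta>) \<le> val (BOr \<alpha> \<beta>)"
    using val_le_of_GI[OF _ axiom_mem[OF lgi_axiom.or2]] val_le_of_GI[OF _ axiom_mem[OF lgi_axiom.or3]]
    by simp
  show "val (BOr \<alpha> \<beta>) \<le> max (val \<alpha>) (val \<beta>)"
    using val_nonneg[of \<alpha>] by (intro val_le_if_above GI_or1 GI_Bot_above_val) auto
qed

lemma val_BNeg: "val (BNeg \<alpha>) = 1 - val \<alpha>"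
proof (rule antisym)
  show "val (BNeg \<alpha>) \<le> 1 - val \<alpha>"
  proof (rule val_le_if_above)
    fix r assume r: "r \<in> {0..1}" "1 - val \<alpha> < r"
    then have "GI (BNeg \<alpha>) (1 - r) (BNeg Top) \<in> M"
      by (intro GI_neg1 GI_Top_below_val) auto
    from GI_trans1[OF _ _ this GI_BNeg_Top_Bot] show "GI (BNeg \<alpha>) (1 - r) Bot \<in> M"
      using r by (simp add: luk_and_def)
  qed (use val_le_one in simp)
  show "1 - val \<alpha> \<le> val (BNeg \<alpha>)"
  proof (rule le_val_if_below)
    fix c assume c: "c \<in> {0..1}" "c < 1 - val \<alpha>"
    then have "GI \<alpha> (1 - (1 - c)) Bot \<in> M"
      by (intro GI_Bot_above_val) auto
    with c have "GI (BNeg Bot) c (BNeg \<alpha>) \<in> M"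
      by (intro GI_neg1) auto
    from GI_trans1[OF _ _ GI_Top_BNeg_Bot this] show "GI Top c (BNeg \<alpha>) \<in> M"
      using c by (simp add: luk_and_def)
  qed (use val_nonneg in simp)
qed

lemma val_BTn: "val (BTn \<alpha> \<beta>) = tn (val \<alpha>) (val \<beta>)"
proof (rule antisym)
  have val01: "val \<alpha> \<in> {0..1}" "val \<beta> \<in> {0..1}"
    using val_nonneg val_le_one by auto
  obtain X Y where X: "X \<longlonglongrightarrow> val \<alpha>" "\<And>n. X n \<in> {0..1}" "\<And>n. val \<alpha> < X n \<or> X n = 1"
    and Y: "Y \<longlonglongrightarrow> val \<beta>" "\<And>n. Y n \<in> {0..1}" "\<And>n. val \<beta> < Y n \<or> Y n = 1"
    using unit_interval_approx_above[OF val01(1)] unit_interval_approx_above[OF val01(2)] by metis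
  have "val (BTn \<alpha> \<beta>) \<le> tn (X n) (Y n)" for n
  proof (rule val_le_of_GI_Bot)
    show "tn (X n) (Y n) \<in> {0..1}"
      using is_tnorm_range[OF tnorm X(2) Y(2)] .
    have "GI (BTn \<alpha> \<beta>) (tconorm tn (1 - X n) (1 - Y n)) Bot \<in> M"
      using X Y by (intro GI_tn2 GI_Bot_above_val) auto
    then show "GI (BTn \<alpha> \<beta>) (1 - tn (X n) (Y n)) Bot \<in> M"
      by (simp add: tconorm_def)
  qed
  then show "val (BTn \<alpha> \<beta>) \<le> tn (val \<alpha>) (val \<beta>)"
    by (intro LIMSEQ_le_const[OF cont_tnorm_tendsto[OF cont_tnorm X(1) Y(1) val01 X(2) Y(2)]]) blast
next
  have val01: "val \<alpha> \<in> {0..1}" "val \<beta> \<in> {0..1}"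
    using val_nonneg val_le_one by auto
  obtain X Y where X: "X \<longlonglongrightarrow> val \<alpha>" "\<And>n. X n \<in> {0..1}" "\<And>n. X n < val \<alpha> \<or> X n = 0"
    and Y: "Y \<longlonglongrightarrow> val \<beta>" "\<And>n. Y n \<in> {0..1}" "\<And>n. Y n < val \<beta> \<or> Y n = 0"
    using unit_interval_approx_below[OF val01(1)] unit_interval_approx_below[OF val01(2)] by metis
  have "tn (X n) (Y n) \<le> val (BTn \<alpha> \<beta>)" for n
    using X Y is_tnorm_range[OF tnorm X(2) Y(2)]
    by (intro le_val GI_tn1 GI_Top_below_val) auto
  then show "tn (val \<alpha>) (val \<beta>) \<le> val (BTn \<alpha> \<beta>)"
    by (intro LIMSEQ_le_const2[OF cont_tnorm_tendsto[OF cont_tnorm X(1) Y(1) val01 X(2) Y(2)]]) blast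
qed

lemma eval_val: "eval tn (\<lambda>n. val (Var n)) \<alpha> = val \<alpha>"
  by (induction \<alpha>) (simp_all add: val_Top val_Bot val_BAnd val_BOr val_BNeg val_BTn)

end

theorem mainTheorem6:
  fixes tn :: "real \<Rightarrow> real \<Rightarrow> real"
    and T :: "fml set" and \<zeta> \<eta> :: bexp and e t :: real
  assumes "is_cont_tnorm tn"
    and "\<forall>\<Phi>\<in>T. \<exists>\<alpha> c \<beta>. \<Phi> = GI \<alpha> c \<beta> \<and> c \<in> {0..1}"
    and "e \<in> {0..1}"
    and "entails tn T (GI \<zeta> e \<eta>)"
    and "t \<in> {0..1}" and "t < e"
  shows "lgi_deriv tn T (GI \<zeta> t \<eta>)"
proof (rule ccontr)
  assume "\<not> lgi_deriv tn T (GI \<zeta> t \<eta>)"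
  moreover have "\<forall>\<Phi>\<in>T. wf \<Phi>" "wf (GI \<zeta> t \<eta>)"
    using assms(2,5) by auto
  ultimately obtain M where "T \<subseteq> M" "GI \<zeta> t \<eta> \<notin> M" and "lgi_prime_theory tn M"
    using lgi_prime_extension[OF assms(1)] by metis
  interpret lgi_prime_theory tn M by fact
  have "sat tn (\<lambda>n. val (Var n)) \<Phi>" if "\<Phi> \<in> T" for \<Phi>
  proof -
    obtain \<alpha> c \<beta> where "\<Phi> = GI \<alpha> c \<beta>" "c \<in> {0..1}"
      using assms(2) \<open>\<Phi> \<in> T\<close> by blast
    with \<open>\<Phi> \<in> T\<close> \<open>T \<subseteq> M\<close> show ?thesis
      using val_le_of_GI[of c \<alpha> \<beta>] by (auto simp: eval_val)
  qed
  then have "sat tn (\<lambda>n. val (Var n)) (GI \<zeta> e \<eta>)"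
    using assms(4) val_nonneg val_le_one by (auto simp: entails_def)
  then have "GI \<zeta> t \<eta> \<in> M"
    using assms(5,6) by (intro GI_of_val_less) (auto simp: eval_val)
  with \<open>GI \<zeta> t \<eta> \<notin> M\<close> show False ..
qed

end
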